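(* Let $n\ge2$ and let $\sum_{l=0}^\infty a_lu^l$ be a power series in the polar $n$-complex variable $u$ with polar $n$-complex coefficients $a_l=\sum_{p=0}^{n-1}h_pa_{lp}$. Put $A_{l+}=\sum_pa_{lp}$, $A_{lk}=\sum_pa_{lp}\cos(2\pi kp/n)$, $\tilde A_{lk}=\sum_pa_{lp}\sin(2\pi kp/n)$ for $k=1,\dots,\lfloor(n-1)/2\rfloor$, and for even $n$, $A_{l-}=\sum_p(-1)^pa_{lp}$. Suppose these quantities are nonzero for all large $l$ and that the limits $$c_+=\lim_{l\to\infty}\frac{|A_{l+}|}{|A_{l+1,+}|},\quad c_-=\lim_{l\to\infty}\frac{|A_{l-}|}{|A_{l+1,-}|}\ (n\text{ even}),\quad c_k=\lim_{l\to\infty}\frac{(A_{lk}^2+\tilde A_{lk}^2)^{1/2}}{(A_{l+1,k}^2+\tilde A_{l+1,k}^2)^{1/2}}$$ exist in $[0,\infty]$. Then the series converges absolutely (i.e. each of its $n$ real component series converges absolutely) at every $u$ with $|v_+|<c_+$, $|v_-|<c_-$ (for even $n$) and $\rho_k<c_k$ for all $k=1,\dots,\lfloor(n-1)/2\rfloor$.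
   Context: Polar $n$-complex numbers: $u=x_0+h_1x_1+\cdots+h_{n-1}x_{n-1}$, $x_j\in\mathbb{R}$, $h_0=1$, componentwise addition, bilinear multiplication $h_jh_k=h_{(j+k)\bmod n}$. For $u$: $v_+=\sum_px_p$; for even $n$, $v_-=\sum_p(-1)^px_p$; $v_k=\sum_px_p\cos(2\pi kp/n)$, $\tilde v_k=\sum_px_p\sin(2\pi kp/n)$, $\rho_k=\sqrt{v_k^2+\tilde v_k^2}$ for $k=1,\dots,\lfloor(n-1)/2\rfloor$. *)

theory Defs
  imports Complex_Main "HOL-Library.Extended_Real"
begin

text \<open>A polar n-complex number x_0 + h_1 x_1 + ... + h_(n-1) x_(n-1) is represented by
  its component function x :: nat => real; only the values at indices p < n matter.\<close>

definition pc_mult :: "nat \<Rightarrow> (nat \<Rightarrow> real) \<Rightarrow> (nat \<Rightarrow> real) \<Rightarrow> (nat \<Rightarrow> real)" where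
  "pc_mult n x y = (\<lambda>j. \<Sum>p<n. \<Sum>q<n. if (p + q) mod n = j then x p * y q else 0)"

definition pc_one :: "nat \<Rightarrow> real" where
  "pc_one = (\<lambda>j. if j = 0 then 1 else 0)"

primrec pc_pow :: "nat \<Rightarrow> (nat \<Rightarrow> real) \<Rightarrow> nat \<Rightarrow> (nat \<Rightarrow> real)" where
  "pc_pow n u 0 = pc_one"
| "pc_pow n u (Suc l) = pc_mult n (pc_pow n u l) u"

definition v_plus :: "nat \<Rightarrow> (nat \<Rightarrow> real) \<Rightarrow> real" where
  "v_plus n x = (\<Sum>p<n. x p)"

definition v_minus :: "nat \<Rightarrow> (nat \<Rightarrow> real) \<Rightarrow> real" where
  "v_minus n x = (\<Sum>p<n. (-1) ^ p * x p)"

definition v_cos :: "nat \<Rightarrow> (nat \<Rightarrow> real) \<Rightarrow> nat \<Rightarrow> real" where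
  "v_cos n x k = (\<Sum>p<n. x p * cos (2 * pi * real k * real p / real n))"

definition v_sin :: "nat \<Rightarrow> (nat \<Rightarrow> real) \<Rightarrow> nat \<Rightarrow> real" where
  "v_sin n x k = (\<Sum>p<n. x p * sin (2 * pi * real k * real p / real n))"

definition v_rho :: "nat \<Rightarrow> (nat \<Rightarrow> real) \<Rightarrow> nat \<Rightarrow> real" where
  "v_rho n x k = sqrt ((v_cos n x k)\<^sup>2 + (v_sin n x k)\<^sup>2)"

end

theory Submission
  imports Defs
begin

text \<open>The discrete Fourier transform \<chi>_k(x) = \<Sum>_p x_p \<omega>^(kp), k < n, with
  \<omega> = cis (2\<pi>/n), is multiplicative for the polar n-complex product and is inverted by
  n x_j = \<Sum>_k \<chi>_k(x) \<omega>^(k(n-j)), so that |x_j| \<le> (1/n) \<Sum>_k |\<chi>_k(x)|. Its moduli are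
  |v_+| (k = 0), |v_-| (k = n/2) and \<rho>_k, for k as well as for n - k since \<chi>_(n-k) is the
  conjugate of \<chi>_k. Hence |\<chi>_k(a_l u^l)| = |\<chi>_k(a_l)| |\<chi>_k(u)|^l is summable in l for every k
  by the ratio test, and the inversion bound dominates each real component of a_l u^l by the
  average of these n series.\<close>

lemma summable_mult_power_of_ratio_limit:
  fixes f :: "nat \<Rightarrow> real" and r :: real and c :: ereal
  assumes lim: "((\<lambda>l. ereal (f l / f (Suc l))) \<longlongrightarrow> c) sequentially"
    and f_nonneg: "\<And>l. f l \<ge> 0" and r_nonneg: "r \<ge> 0" and r_less: "ereal r < c"
  shows "summable (\<lambda>l. f l * r ^ l)"
proof -
  obtain q where "r < q" and q_less: "ereal q < c"
    using ereal_dense2[OF r_less] by auto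
  have q_pos: "q > 0" using \<open>r < q\<close> r_nonneg by simp
  obtain N where N: "\<And>l. l \<ge> N \<Longrightarrow> q < f l / f (Suc l)"
    using order_tendstoD(1)[OF lim q_less] unfolding eventually_sequentially by auto
  show ?thesis
  proof (rule summable_ratio_test[of "r / q" N])
    show "r / q < 1" using \<open>r < q\<close> q_pos by simp
  next
    fix l assume "l \<ge> N"
    then have ratio: "q < f l / f (Suc l)" by (rule N)
    then have "f (Suc l) > 0" using f_nonneg[of "Suc l"] q_pos by (cases "f (Suc l) = 0") auto
    with ratio have "f (Suc l) \<le> f l / q" using q_pos by (simp add: field_simps)
    then have "f (Suc l) * r ^ Suc l \<le> f l / q * r ^ Suc l"
      using r_nonneg by (intro mult_right_mono) auto
    also have "\<dots> = r / q * (f l * r ^ l)" by simp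
    finally show "norm (f (Suc l) * r ^ Suc l) \<le> r / q * norm (f l * r ^ l)"
      using f_nonneg r_nonneg by simp
  qed
qed

definition unit_root :: "nat \<Rightarrow> complex" where
  "unit_root n = cis (2 * pi / real n)"

lemma unit_root_power: "unit_root n ^ m = cis (2 * pi * real m / real n)"
  unfolding unit_root_def DeMoivre by (simp add: field_simps)

lemma norm_unit_root_power [simp]: "cmod (unit_root n ^ m) = 1"
  unfolding unit_root_power by simp

lemma unit_root_power_self [simp]: "unit_root n ^ n = 1"
  unfolding unit_root_power by (cases "n = 0") simp_all

lemma unit_root_power_eq_1_iff:
  assumes "n > 0"
  shows "unit_root n ^ m = 1 \<longleftrightarrow> n dvd m"
proof
  assume "unit_root n ^ m = 1"
  then have "cos (2 * pi * real m / real n) = 1"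
    unfolding unit_root_power by (metis cis.sel(1) one_complex.sel(1))
  then obtain i :: int where "2 * pi * real m / real n = of_int i * 2 * pi"
    using cos_one_2pi_int by blast
  then have "real m = of_int i * real n" using assms by (simp add: field_simps)
  then have "int m = i * int n" by (metis of_int_eq_iff of_int_mult of_int_of_nat_eq)
  then show "n dvd m" by (metis dvd_triv_right int_dvd_int_iff)
next
  assume "n dvd m"
  then show "unit_root n ^ m = 1" by (auto simp: power_mult)
qed

lemma unit_root_power_cong:
  assumes "a mod n = b mod n"
  shows "unit_root n ^ a = unit_root n ^ b"
proof -
  have "unit_root n ^ m = unit_root n ^ (m mod n)" for m
  proof -
    have "unit_root n ^ m = (unit_root n ^ n) ^ (m div n) * unit_root n ^ (m mod n)"
      by (simp only: power_mult [symmetric] power_add [symmetric] mult_div_mod_eq)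
    then show ?thesis by simp
  qed
  then show ?thesis using assms by metis
qed

lemma cnj_unit_root_power:
  assumes "k \<le> n"
  shows "cnj (unit_root n ^ k) = unit_root n ^ (n - k)"
proof -
  have "cnj (unit_root n ^ k) * unit_root n ^ k = 1"
    by (metis complex_norm_square norm_unit_root_power mult.commute of_real_1 power_one)
  moreover have "unit_root n ^ (n - k) * unit_root n ^ k = 1"
    using assms by (simp flip: power_add)
  ultimately show ?thesis
    by (metis mult_right_cancel norm_unit_root_power norm_zero zero_neq_one)
qed

lemma sum_unit_root_powers:
  assumes "n > 0"
  shows "(\<Sum>k<n. unit_root n ^ (m * k)) = (if n dvd m then of_nat n else 0)"
proof (cases "n dvd m")
  case True
  then have "unit_root n ^ m = 1" using unit_root_power_eq_1_iff[OF assms] by simp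
  then show ?thesis using True by (simp add: power_mult)
next
  case False
  then have "unit_root n ^ m \<noteq> 1" using unit_root_power_eq_1_iff[OF assms] by simp
  moreover have "(unit_root n ^ m) ^ n = (unit_root n ^ n) ^ m"
    by (simp only: power_mult [symmetric] mult.commute)
  ultimately show ?thesis using False by (simp add: power_mult sum_gp_strict)
qed

definition pc_dft :: "nat \<Rightarrow> (nat \<Rightarrow> real) \<Rightarrow> nat \<Rightarrow> complex" where
  "pc_dft n x k = (\<Sum>p<n. of_real (x p) * unit_root n ^ (k * p))"

lemma pc_dft_mult: "pc_dft n (pc_mult n x y) k = pc_dft n x k * pc_dft n y k"
proof -
  let ?t = "\<lambda>p q j. if (p + q) mod n = j then of_real (x p * y q) * unit_root n ^ (k * j) else 0"
  have "pc_dft n (pc_mult n x y) k = (\<Sum>j<n. \<Sum>p<n. \<Sum>q<n. ?t p q j)"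
    unfolding pc_dft_def pc_mult_def of_real_sum sum_distrib_right by (intro sum.cong refl) simp
  also have "\<dots> = (\<Sum>p<n. \<Sum>q<n. \<Sum>j<n. ?t p q j)"
    by (rule trans[OF sum.swap], rule sum.cong[OF refl], rule sum.swap)
  also have "\<dots> = (\<Sum>p<n. \<Sum>q<n. of_real (x p * y q) * unit_root n ^ (k * ((p + q) mod n)))"
    by (simp add: sum.delta')
  also have "\<dots> = (\<Sum>p<n. \<Sum>q<n. of_real (x p * y q) * unit_root n ^ (k * (p + q)))"
    by (intro sum.cong refl arg_cong2[where f = "(*)"] unit_root_power_cong)
      (simp add: mod_mult_right_eq)
  also have "\<dots> = pc_dft n x k * pc_dft n y k"
    unfolding pc_dft_def sum_product by (intro sum.cong refl) (simp add: distrib_left power_add)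
  finally show ?thesis .
qed

lemma pc_dft_one:
  assumes "n > 0"
  shows "pc_dft n pc_one k = 1"
proof -
  obtain m where n: "n = Suc m" using assms by (cases n) auto
  show ?thesis unfolding pc_dft_def pc_one_def n sum.lessThan_Suc_shift by simp
qed

lemma pc_dft_pow: "n > 0 \<Longrightarrow> pc_dft n (pc_pow n u l) k = pc_dft n u k ^ l"
  by (induction l) (simp_all add: pc_dft_one pc_dft_mult)

lemma norm_pc_dft: "cmod (pc_dft n x k) = v_rho n x k"
proof -
  have "Re (pc_dft n x k) = v_cos n x k" "Im (pc_dft n x k) = v_sin n x k"
    unfolding pc_dft_def v_cos_def v_sin_def unit_root_power
    by (simp_all add: Re_sum Im_sum mult.assoc)
  then show ?thesis unfolding v_rho_def cmod_def by simp
qed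

lemma pc_dft_0: "pc_dft n x 0 = of_real (v_plus n x)"
  unfolding pc_dft_def v_plus_def by simp

lemma pc_dft_half:
  assumes "n = 2 * k"
  shows "pc_dft n x k = of_real (v_minus n x)"
proof (cases "k = 0")
  case True
  then show ?thesis using assms by (simp add: pc_dft_def v_minus_def)
next
  case False
  then have "unit_root n ^ k = -1"
    using assms unfolding unit_root_power by (simp add: field_simps)
  then show ?thesis unfolding pc_dft_def v_minus_def power_mult by (simp add: mult.commute)
qed

lemma pc_dft_reflect:
  assumes "k \<le> n"
  shows "pc_dft n x (n - k) = cnj (pc_dft n x k)"
  unfolding pc_dft_def power_mult cnj_unit_root_power[OF assms, symmetric] by simp

lemma pc_dft_inversion:
  assumes "j < n"
  shows "of_nat n * of_real (x j) = (\<Sum>k<n. pc_dft n x k * unit_root n ^ (k * (n - j)))"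
proof -
  have n: "n > 0" using assms by simp
  have dvd_iff: "n dvd p + (n - j) \<longleftrightarrow> p = j" if "p < n" for p
  proof
    assume "n dvd p + (n - j)"
    then obtain c where c: "p + (n - j) = n * c" by (auto elim: dvdE)
    with that assms have "0 < n * c" "n * c < n * 2" by linarith+
    then have "c = 1" by simp
    with c show "p = j" using assms by simp
  qed (use assms in simp)
  have "(\<Sum>k<n. pc_dft n x k * unit_root n ^ (k * (n - j)))
      = (\<Sum>k<n. \<Sum>p<n. of_real (x p) * unit_root n ^ ((p + (n - j)) * k))"
    unfolding pc_dft_def sum_distrib_right
    by (intro sum.cong refl) (simp add: algebra_simps power_add)
  also have "\<dots> = (\<Sum>p<n. of_real (x p) * (\<Sum>k<n. unit_root n ^ ((p + (n - j)) * k)))"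
    unfolding sum_distrib_left by (rule sum.swap)
  also have "\<dots> = (\<Sum>p<n. if p = j then of_nat n * of_real (x j) else 0)"
    by (intro sum.cong refl) (simp add: sum_unit_root_powers[OF n] dvd_iff)
  also have "\<dots> = of_nat n * of_real (x j)"
    using assms by simp
  finally show ?thesis ..
qed

lemma abs_le_sum_norm_pc_dft:
  assumes "j < n"
  shows "\<bar>x j\<bar> \<le> (\<Sum>k<n. cmod (pc_dft n x k)) / real n"
proof -
  have "real n * \<bar>x j\<bar> = cmod (\<Sum>k<n. pc_dft n x k * unit_root n ^ (k * (n - j)))"
    by (simp flip: pc_dft_inversion[OF assms] add: norm_mult)
  also have "\<dots> \<le> (\<Sum>k<n. cmod (pc_dft n x k))"
    by (rule order_trans[OF norm_sum]) (simp add: norm_mult)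
  finally show ?thesis using assms by (simp add: field_simps)
qed

lemma summable_pc_series_component:
  assumes dft_summable: "\<And>k. k < n \<Longrightarrow>
      summable (\<lambda>l. cmod (pc_dft n (a l) k) * cmod (pc_dft n u k) ^ l)"
    and "j < n"
  shows "summable (\<lambda>l. \<bar>pc_mult n (a l) (pc_pow n u l) j\<bar>)"
proof (rule summable_comparison_test')
  show "summable (\<lambda>l. (\<Sum>k<n. cmod (pc_dft n (a l) k) * cmod (pc_dft n u k) ^ l) / real n)"
    using dft_summable by (intro summable_divide summable_sum) simp
next
  fix l
  have "n > 0" using \<open>j < n\<close> by simp
  then show "norm \<bar>pc_mult n (a l) (pc_pow n u l) j\<bar>
      \<le> (\<Sum>k<n. cmod (pc_dft n (a l) k) * cmod (pc_dft n u k) ^ l) / real n"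
    using abs_le_sum_norm_pc_dft[OF \<open>j < n\<close>, of "pc_mult n (a l) (pc_pow n u l)"]
    by (simp add: pc_dft_mult pc_dft_pow norm_mult norm_power)
qed

lemma frequency_cases:
  fixes k n :: nat
  assumes "k < n"
  obtains "k = 0" | "1 \<le> k" "k \<le> (n - 1) div 2" | "n = 2 * k"
    | "1 \<le> n - k" "n - k \<le> (n - 1) div 2"
proof -
  have "k = 0 \<or> 1 \<le> k \<and> k \<le> (n - 1) div 2 \<or> n = 2 * k
      \<or> 1 \<le> n - k \<and> n - k \<le> (n - 1) div 2"
    using assms by presburger
  then show ?thesis using that by blast
qed

theorem mainTheorem14:
  fixes n :: nat and a :: "nat \<Rightarrow> nat \<Rightarrow> real" and u :: "nat \<Rightarrow> real"
    and c_plus c_minus :: ereal and c :: "nat \<Rightarrow> ereal"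
  assumes n2: "n \<ge> 2"
    and nz_plus: "eventually (\<lambda>l. v_plus n (a l) \<noteq> 0) sequentially"
    and nz_minus: "even n \<Longrightarrow> eventually (\<lambda>l. v_minus n (a l) \<noteq> 0) sequentially"
    and nz_k: "\<And>k. 1 \<le> k \<Longrightarrow> k \<le> (n - 1) div 2 \<Longrightarrow>
               eventually (\<lambda>l. v_rho n (a l) k \<noteq> 0) sequentially"
    and lim_plus: "((\<lambda>l. ereal (\<bar>v_plus n (a l)\<bar> / \<bar>v_plus n (a (Suc l))\<bar>))
                     \<longlongrightarrow> c_plus) sequentially"
    and lim_minus: "even n \<Longrightarrow> ((\<lambda>l. ereal (\<bar>v_minus n (a l)\<bar> / \<bar>v_minus n (a (Suc l))\<bar>))
                     \<longlongrightarrow> c_minus) sequentially"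
    and lim_k: "\<And>k. 1 \<le> k \<Longrightarrow> k \<le> (n - 1) div 2 \<Longrightarrow>
               ((\<lambda>l. ereal (v_rho n (a l) k / v_rho n (a (Suc l)) k)) \<longlongrightarrow> c k) sequentially"
    and u_plus: "ereal \<bar>v_plus n u\<bar> < c_plus"
    and u_minus: "even n \<Longrightarrow> ereal \<bar>v_minus n u\<bar> < c_minus"
    and u_k: "\<And>k. 1 \<le> k \<Longrightarrow> k \<le> (n - 1) div 2 \<Longrightarrow> ereal (v_rho n u k) < c k"
  shows "\<forall>j<n. summable (\<lambda>l. \<bar>pc_mult n (a l) (pc_pow n u l) j\<bar>)"
proof (intro allI impI summable_pc_series_component)
  fix k assume "k < n"
  then show "summable (\<lambda>l. cmod (pc_dft n (a l) k) * cmod (pc_dft n u k) ^ l)"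
  proof (cases rule: frequency_cases)
    case 1
    then show ?thesis
      using summable_mult_power_of_ratio_limit[OF lim_plus _ _ u_plus] by (simp add: pc_dft_0)
  next
    case 2
    then show ?thesis
      using summable_mult_power_of_ratio_limit[OF lim_k[OF 2] _ _ u_k[OF 2]]
      by (simp add: norm_pc_dft v_rho_def)
  next
    case 3
    then have "even n" by simp
    with 3 show ?thesis
      using summable_mult_power_of_ratio_limit[OF lim_minus _ _ u_minus] by (simp add: pc_dft_half)
  next
    case 4
    have "cmod (pc_dft n x k) = v_rho n x (n - k)" for x
      using pc_dft_reflect[of "n - k" n x] \<open>k < n\<close> by (simp flip: norm_pc_dft)
    then show ?thesis
      using summable_mult_power_of_ratio_limit[OF lim_k[OF 4] _ _ u_k[OF 4]]
      by (simp add: v_rho_def)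
  qed
qed

end
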